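(* Assume $\mathrm{Unif}(\mathcal S)$ and $\mathfrak d=\mathfrak c$. Then there exists a strong measure zero set $X\subseteq\mathbb R$ with $|X|=\mathfrak c$.
   Context: $\mathfrak c=2^{\aleph_0}$. A set $X\subseteq\mathbb R$ has strong measure zero if for every sequence $\langle\varepsilon_i:i<\omega\rangle$ of positive reals there is a sequence $\langle x_i:i<\omega\rangle$ of reals with $X\subseteq\bigcup_{i<\omega}(x_i-\varepsilon_i,x_i+\varepsilon_i)$. $\mathcal S$ denotes the ideal of strong measure zero sets. $\mathrm{Unif}(\mathcal S)$ is the statement "every set of reals of cardinality less than $\mathfrak c$ has strong measure zero". $\mathfrak d$ is the least cardinality of a family $\mathcal H\subseteq\omega^\omega$ such that for every $g\in\omega^\omega$ there is $h\in\mathcal H$ with $g(n)<h(n)$ for all $n$. *)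

theory Defs
  imports Complex_Main "HOL-Library.Equipollence"
begin

definition strong_measure_zero :: "real set \<Rightarrow> bool" where
  "strong_measure_zero X \<longleftrightarrow>
     (\<forall>\<epsilon> :: nat \<Rightarrow> real. (\<forall>i. 0 < \<epsilon> i) \<longrightarrow>
        (\<exists>x :: nat \<Rightarrow> real. X \<subseteq> (\<Union>i. {x i - \<epsilon> i <..< x i + \<epsilon> i})))"

definition Unif_S :: bool where
  "Unif_S \<longleftrightarrow> (\<forall>X :: real set. X \<prec> (UNIV :: real set) \<longrightarrow> strong_measure_zero X)"

definition dominating :: "(nat \<Rightarrow> nat) set \<Rightarrow> bool" where
  "dominating H \<longleftrightarrow> (\<forall>g :: nat \<Rightarrow> nat. \<exists>h\<in>H. \<forall>n. g n < h n)"

text \<open>d = c: the least cardinality of a dominating family equals the continuum.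
  Since the whole Baire space is a dominating family of size c, this says
  exactly that no dominating family has cardinality less than c.\<close>
definition d_eq_c :: bool where
  "d_eq_c \<longleftrightarrow> (\<forall>H. dominating H \<longrightarrow> \<not> (H \<prec> (UNIV :: real set)))"

end

theory Submission
  imports Defs
begin

(* Well-order R in type c and let sigma map R onto the Baire space. A function
   a : nat -> nat -> nat determines levels c 0 = 0, c (j + 1) = c j + 2 + a j (c j) and the real
   x = sum_j 2^-(c j). If some gap c (j + 1) - c j exceeds 2 + D_g (c j), then x lies within
   2^-(D_g (c j)) of a dyadic rational m / 2^(c j); D_g grows so fast that all these intervals
   together form one sequence of intervals with radii 2^-(g i). By d = c, for every s there is
   a function not dominated by the fewer than c functions derived from D_(sigma r), r < s; letting
   a_s grow like its partial sums puts x_s into the cover for sigma r whenever r <= s. Given g, the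
   x_s with s >= r, where sigma r = g, are thus covered by the dyadic intervals, and the fewer than c
   remaining ones by Unif(S). The parity of a_s records the rational cut of s, so s |-> x_s is
   injective. *)

unbundle cardinal_syntax

section \<open>Sums of powers of one half along gapped sequences\<close>

definition gapped :: "(nat \<Rightarrow> nat) \<Rightarrow> bool" where
  "gapped c \<longleftrightarrow> (\<forall>j. c j + 2 \<le> c (Suc j))"

definition dyadic_sum :: "(nat \<Rightarrow> nat) \<Rightarrow> real" where
  "dyadic_sum c = (\<Sum>j. (1/2) ^ c j)"

lemma gapped_add: "gapped c \<Longrightarrow> c p + 2 * i \<le> c (i + p)"
proof (induction i)
  case (Suc i)
  then have "c (i + p) + 2 \<le> c (Suc (i + p))" by (simp add: gapped_def)
  with Suc show ?case by simp
qed simp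

lemma gapped_strict_mono:
  assumes "gapped c"
  shows "strict_mono c"
  unfolding strict_mono_Suc_iff
proof
  fix j
  have "c j + 2 \<le> c (Suc j)" using assms by (simp add: gapped_def)
  then show "c j < c (Suc j)" by simp
qed

lemma gapped_term_le:
  assumes "gapped c"
  shows "(1/2::real) ^ c (j + p) \<le> (1/2) ^ c p * (1/4) ^ j"
proof -
  have "(1/2::real) ^ c (j + p) \<le> (1/2) ^ (c p + 2 * j)"
    using gapped_add[OF assms, of p j] by (intro power_decreasing) auto
  also have "\<dots> = (1/2) ^ c p * (1/4) ^ j"
    by (simp add: power_add power_mult power2_eq_square)
  finally show ?thesis .
qed

lemma summable_gapped_tail: "gapped c \<Longrightarrow> summable (\<lambda>j. (1/2::real) ^ c (j + p))"
  by (rule summable_comparison_test[where g = "\<lambda>j. (1/2) ^ c p * (1/4) ^ j"])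
    (auto intro: gapped_term_le summable_mult summable_geometric)

lemma gapped_tail_le:
  assumes c: "gapped c"
  shows "(\<Sum>j. (1/2::real) ^ c (j + p)) \<le> 4/3 * (1/2) ^ c p"
proof -
  have geometric: "summable (\<lambda>j. (1/4::real) ^ j)" by (rule summable_geometric) simp
  have "(\<Sum>j. (1/2::real) ^ c (j + p)) \<le> (\<Sum>j. (1/2) ^ c p * (1/4) ^ j)"
    by (rule suminf_le) (use gapped_term_le[OF c] summable_gapped_tail[OF c] geometric in auto)
  also have "\<dots> = (1/2) ^ c p * (\<Sum>j. (1/4::real) ^ j)"
    by (rule suminf_mult[OF geometric])
  also have "(\<Sum>j. (1/4::real) ^ j) = 4/3"
    by (subst suminf_geometric) auto
  finally show ?thesis by simp
qed

lemma gapped_tail_ge: "gapped c \<Longrightarrow> (1/2::real) ^ c p \<le> (\<Sum>j. (1/2) ^ c (j + p))"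
  using sum_le_suminf[OF summable_gapped_tail[of c p], of "{0}"] by auto

lemma dyadic_sum_split:
  "gapped c \<Longrightarrow> dyadic_sum c = (\<Sum>j. (1/2) ^ c (j + k)) + (\<Sum>i<k. (1/2) ^ c i)"
  unfolding dyadic_sum_def by (rule suminf_split_initial_segment) (use summable_gapped_tail[of c 0] in simp)

lemma dyadic_sum_less:
  assumes "gapped c" "gapped c'" "c j < c' j" "\<forall>i<j. c i = c' i"
  shows "dyadic_sum c' < dyadic_sum c"
proof -
  have "(\<Sum>i. (1/2::real) ^ c' (i + j)) \<le> 4/3 * (1/2) ^ c' j"
    by (rule gapped_tail_le[OF assms(2)])
  also have "(1/2::real) ^ c' j \<le> (1/2) ^ Suc (c j)"
    by (rule power_decreasing) (use assms(3) in auto)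
  also have "4/3 * (1/2::real) ^ Suc (c j) < (1/2) ^ c j" by simp
  also have "\<dots> \<le> (\<Sum>i. (1/2::real) ^ c (i + j))" by (rule gapped_tail_ge[OF assms(1)])
  finally show ?thesis
    using dyadic_sum_split[OF assms(1), of j] dyadic_sum_split[OF assms(2), of j] assms(4) by simp
qed

lemma dyadic_sum_inj:
  assumes "gapped c" "gapped c'" "dyadic_sum c = dyadic_sum c'"
  shows "c = c'"
proof (rule ccontr)
  assume "c \<noteq> c'"
  then have ex: "\<exists>j. c j \<noteq> c' j" by auto
  define j where "j = (LEAST j. c j \<noteq> c' j)"
  have "c j \<noteq> c' j" unfolding j_def by (rule LeastI_ex[OF ex])
  moreover have "\<forall>i<j. c i = c' i" unfolding j_def using not_less_Least by blast
  ultimately show False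
    using dyadic_sum_less[OF assms(1,2)] dyadic_sum_less[OF assms(2,1)] assms(3)
    by (metis linorder_neqE_nat less_irrefl)
qed

lemma partial_dyadic_sum:
  assumes "strict_mono c"
  shows "\<exists>m::nat. m < (2::nat) ^ (c j + 1) \<and> (\<Sum>i<Suc j. (1/2::real) ^ c i) = m / 2 ^ c j"
proof (induction j)
  case 0
  show ?case
    using one_less_power[of "2::nat" "c 0 + 1"] by (intro exI[of _ 1]) (simp add: power_one_over)
next
  case (Suc j)
  then obtain m :: nat where m: "m < (2::nat) ^ (c j + 1)" "(\<Sum>i<Suc j. (1/2::real) ^ c i) = m / 2 ^ c j"
    by blast
  define d where "d = c (Suc j) - c j"
  have d: "c (Suc j) = c j + d" "0 < d"
    unfolding d_def using strict_monoD[OF assms, of j "Suc j"] by auto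
  have bound: "m * 2 ^ d + 1 < (2::nat) ^ (c (Suc j) + 1)"
  proof -
    have "m * 2 ^ d + 1 < (m + 1) * 2 ^ d"
      using one_less_power[of "2::nat" d] d(2) by simp
    also have "\<dots> \<le> 2 ^ (c j + 1) * 2 ^ d"
      using m(1) by (intro mult_right_mono) simp_all
    also have "\<dots> = 2 ^ (c (Suc j) + 1)"
      by (simp add: d(1) power_add)
    finally show ?thesis .
  qed
  have "(\<Sum>i<Suc (Suc j). (1/2::real) ^ c i) = m / 2 ^ c j + (1/2) ^ (c j + d)"
    by (simp only: sum.lessThan_Suc[of _ "Suc j"] m(2) d(1))
  also have "\<dots> = real m / 2 ^ c j + 1 / (2 ^ c j * 2 ^ d)"
    by (simp add: power_add power_one_over)
  also have "\<dots> = real (m * 2 ^ d + 1) / (2 ^ c j * 2 ^ d)"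
    by (simp add: field_simps)
  also have "\<dots> = real (m * 2 ^ d + 1) / 2 ^ c (Suc j)"
    by (simp only: d(1) power_add)
  finally show ?case
    using bound by (intro exI[of _ "m * 2 ^ d + 1"] conjI)
qed

section \<open>Covering by sequences of intervals\<close>

definition coverable :: "(nat \<Rightarrow> real) \<Rightarrow> real set \<Rightarrow> bool" where
  "coverable \<epsilon> X \<longleftrightarrow> (\<exists>x. X \<subseteq> (\<Union>i. {x i - \<epsilon> i <..< x i + \<epsilon> i}))"

lemma strong_measure_zero_iff_coverable:
  "strong_measure_zero X \<longleftrightarrow> (\<forall>\<epsilon>. (\<forall>i. 0 < \<epsilon> i) \<longrightarrow> coverable \<epsilon> X)"
  unfolding strong_measure_zero_def coverable_def ..

lemma coverable_mono:
  assumes "coverable \<epsilon> X" "Y \<subseteq> X" "\<And>i. \<epsilon> i \<le> \<delta> i"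
  shows "coverable \<delta> Y"
proof -
  obtain x where "X \<subseteq> (\<Union>i. {x i - \<epsilon> i <..< x i + \<epsilon> i})"
    using assms(1) unfolding coverable_def by blast
  also have "\<dots> \<subseteq> (\<Union>i. {x i - \<delta> i <..< x i + \<delta> i})"
  proof (intro UN_mono subsetI)
    fix i t assume "t \<in> {x i - \<epsilon> i <..< x i + \<epsilon> i}"
    then show "t \<in> {x i - \<delta> i <..< x i + \<delta> i}" using assms(3)[of i] by simp
  qed simp
  finally show ?thesis
    using assms(2) unfolding coverable_def by blast
qed

lemma coverable_Un_interleave:
  assumes "coverable (\<lambda>i. \<epsilon> (2 * i)) A" "coverable (\<lambda>i. \<epsilon> (2 * i + 1)) B"
  shows "coverable \<epsilon> (A \<union> B)"
proof -
  obtain y where y: "A \<subseteq> (\<Union>i. {y i - \<epsilon> (2 * i) <..< y i + \<epsilon> (2 * i)})"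
    using assms(1) unfolding coverable_def by blast
  obtain z where z: "B \<subseteq> (\<Union>i. {z i - \<epsilon> (2 * i + 1) <..< z i + \<epsilon> (2 * i + 1)})"
    using assms(2) unfolding coverable_def by blast
  define x where "x n = (if even n then y (n div 2) else z (n div 2))" for n
  have "A \<subseteq> (\<Union>i. {x i - \<epsilon> i <..< x i + \<epsilon> i})"
  proof
    fix t assume "t \<in> A"
    then obtain i where "t \<in> {y i - \<epsilon> (2 * i) <..< y i + \<epsilon> (2 * i)}" using y by blast
    then show "t \<in> (\<Union>i. {x i - \<epsilon> i <..< x i + \<epsilon> i})"
      by (intro UN_I[of "2 * i"]) (simp_all add: x_def)
  qed
  moreover have "B \<subseteq> (\<Union>i. {x i - \<epsilon> i <..< x i + \<epsilon> i})"
  proof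
    fix t assume "t \<in> B"
    then obtain i where "t \<in> {z i - \<epsilon> (2 * i + 1) <..< z i + \<epsilon> (2 * i + 1)}" using z by blast
    then show "t \<in> (\<Union>i. {x i - \<epsilon> i <..< x i + \<epsilon> i})"
      by (intro UN_I[of "2 * i + 1"]) (simp_all add: x_def)
  qed
  ultimately show ?thesis unfolding coverable_def by blast
qed

lemma strong_measure_zeroI_dyadic:
  assumes "\<And>g. coverable (\<lambda>i. (1/2) ^ g i) X"
  shows "strong_measure_zero X"
  unfolding strong_measure_zero_iff_coverable
proof (intro allI impI)
  fix \<epsilon> :: "nat \<Rightarrow> real" assume pos: "\<forall>i. 0 < \<epsilon> i"
  have "\<exists>e. (1/2::real) ^ e < \<epsilon> i" for i
    using real_arch_pow_inv[of "\<epsilon> i" "1/2"] pos by auto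
  then obtain g where "\<And>i. (1/2::real) ^ g i < \<epsilon> i" by metis
  then show "coverable \<epsilon> X"
    by (intro coverable_mono[OF assms[of g] order_refl] less_imp_le)
qed

text \<open>The interval around \<open>m / 2 ^ n\<close> gets index \<open>prod_encode (n, m)\<close>, so \<open>cover_depth g n\<close>
  dominates \<open>g\<close> on all intervals of level at most \<open>n\<close>. Numerators up to \<open>2 ^ (n + 1)\<close> suffice
  because partial dyadic sums of gapped sequences are below 2.\<close>

definition cover_depth :: "(nat \<Rightarrow> nat) \<Rightarrow> nat \<Rightarrow> nat" where
  "cover_depth g n = (\<Sum>p\<le>n. \<Sum>m\<le>2 ^ (p + 1). g (prod_encode (p, m)))"

definition dyadic_cover :: "(nat \<Rightarrow> nat) \<Rightarrow> real set" where
  "dyadic_cover g =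
     {t. \<exists>n m. m \<le> 2 ^ (n + 1) \<and> \<bar>t - real m / 2 ^ n\<bar> < (1/2) ^ cover_depth g n}"

lemma mono_cover_depth: "mono (cover_depth g)"
  unfolding mono_def cover_depth_def by (auto intro: sum_mono2)

lemma le_cover_depth: "m \<le> 2 ^ (n + 1) \<Longrightarrow> g (prod_encode (n, m)) \<le> cover_depth g n"
  unfolding cover_depth_def
  by (rule order_trans[OF member_le_sum member_le_sum[of n]]) auto

lemma coverable_dyadic_cover: "coverable (\<lambda>i. (1/2) ^ g i) (dyadic_cover g)"
  unfolding coverable_def
proof (intro exI subsetI)
  let ?x = "\<lambda>i. real (snd (prod_decode i)) / 2 ^ fst (prod_decode i)"
  fix t assume "t \<in> dyadic_cover g"
  then obtain n m where m: "m \<le> 2 ^ (n + 1)" and t: "\<bar>t - real m / 2 ^ n\<bar> < (1/2) ^ cover_depth g n"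
    unfolding dyadic_cover_def by blast
  define i where "i = prod_encode (n, m)"
  have "(1/2::real) ^ cover_depth g n \<le> (1/2) ^ g i"
    unfolding i_def by (rule power_decreasing[OF le_cover_depth[OF m]]) auto
  moreover have "?x i = real m / 2 ^ n" unfolding i_def by simp
  ultimately have "t \<in> {?x i - (1/2) ^ g i <..< ?x i + (1/2) ^ g i}"
    using t by (simp only: abs_less_iff greaterThanLessThan_iff) linarith
  then show "t \<in> (\<Union>i. {?x i - (1/2) ^ g i <..< ?x i + (1/2) ^ g i})" by blast
qed

lemma dyadic_sum_in_dyadic_cover:
  assumes c: "gapped c" and jump: "cover_depth g (c j) + 2 \<le> c (Suc j)"
  shows "dyadic_sum c \<in> dyadic_cover g"
proof -
  let ?tail = "\<Sum>i. (1/2::real) ^ c (i + Suc j)"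
  obtain m :: nat where m: "m < 2 ^ (c j + 1)" "(\<Sum>i<Suc j. (1/2::real) ^ c i) = m / 2 ^ c j"
    using partial_dyadic_sum[OF gapped_strict_mono[OF c]] by blast
  have "dyadic_sum c - m / 2 ^ c j = ?tail"
    using dyadic_sum_split[OF c, of "Suc j"] m(2) by simp
  moreover have "0 \<le> ?tail"
    by (rule suminf_nonneg[OF summable_gapped_tail[OF c]]) simp
  moreover have "?tail < (1/2) ^ cover_depth g (c j)"
  proof -
    have "?tail \<le> 4/3 * (1/2) ^ c (Suc j)"
      by (rule gapped_tail_le[OF c])
    also have "(1/2::real) ^ c (Suc j) \<le> (1/2) ^ (cover_depth g (c j) + 2)"
      by (rule power_decreasing[OF jump]) auto
    also have "4/3 * (1/2::real) ^ (cover_depth g (c j) + 2) < (1/2) ^ cover_depth g (c j)"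
      by (simp add: power_add)
    finally show ?thesis by simp
  qed
  ultimately show ?thesis
    unfolding dyadic_cover_def using m(1) by (intro CollectI exI[of _ "c j"] exI[of _ m]) auto
qed

section \<open>Levels with prescribed gaps\<close>

fun levels :: "(nat \<Rightarrow> nat \<Rightarrow> nat) \<Rightarrow> nat \<Rightarrow> nat" where
  "levels a 0 = 0"
| "levels a (Suc j) = levels a j + 2 + a j (levels a j)"

lemma gapped_levels: "gapped (levels a)"
  by (simp add: gapped_def)

lemma dyadic_sum_levels_inj:
  assumes "dyadic_sum (levels a) = dyadic_sum (levels b)"
  shows "a j (levels a j) = b j (levels a j)"
proof -
  have "levels a = levels b"
    using dyadic_sum_inj[OF gapped_levels gapped_levels assms] .
  then have "levels a (Suc j) = levels b (Suc j)" "levels a j = levels b j" by simp_all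
  then show ?thesis by simp
qed

lemma levels_bracket: "\<exists>j. levels a j \<le> n \<and> n < levels a (Suc j)"
proof (induction n)
  case 0
  show ?case by (intro exI[of _ 0]) simp
next
  case (Suc n)
  then obtain j where j: "levels a j \<le> n" "n < levels a (Suc j)" by blast
  show ?case
  proof (cases "Suc n < levels a (Suc j)")
    case True
    with j show ?thesis by (intro exI[of _ j]) simp
  next
    case False
    with j have "Suc n = levels a (Suc j)" by simp
    then show ?thesis by (intro exI[of _ "Suc j"]) simp
  qed
qed

text \<open>\<open>H\<close> is applied twice because the level just above \<open>n\<close> is only known to be below \<open>H n\<close>.\<close>

lemma levels_jump_exceeds:
  assumes H: "mono H" and k: "H (H n) \<le> k n" and a: "\<And>j p. (\<Sum>i\<le>p. k i) \<le> a j p"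
  shows "\<exists>j. H (levels a j) \<le> levels a (Suc j)"
proof (rule ccontr)
  assume "\<not> ?thesis"
  then have small: "levels a (Suc i) < H (levels a i)" for i by (simp add: not_le)
  obtain j where j: "levels a j \<le> n" "n < levels a (Suc j)"
    using levels_bracket by blast
  have "H (levels a (Suc j)) \<le> H (H (levels a j))"
    using small[of j] by (intro monoD[OF H] less_imp_le)
  also have "\<dots> \<le> H (H n)"
    using j(1) by (intro monoD[OF H])
  also have "\<dots> \<le> k n" by (rule k)
  also have "\<dots> \<le> (\<Sum>i\<le>levels a (Suc j). k i)"
    by (rule member_le_sum) (use j(2) in auto)
  also have "\<dots> \<le> a (Suc j) (levels a (Suc j))" by (rule a)
  also have "\<dots> \<le> levels a (Suc (Suc j))" by simp
  finally show False using small[of "Suc j"] by simp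
qed

lemma dyadic_sum_levels_in_dyadic_cover:
  assumes "cover_depth g (cover_depth g n + 2) + 2 \<le> k n" and "\<And>j p. (\<Sum>i\<le>p. k i) \<le> a j p"
  shows "dyadic_sum (levels a) \<in> dyadic_cover g"
proof -
  have "mono (\<lambda>n. cover_depth g n + 2)"
    using mono_cover_depth[of g] by (simp add: mono_def)
  then obtain j where "cover_depth g (levels a j) + 2 \<le> levels a (Suc j)"
    using levels_jump_exceeds[of "\<lambda>n. cover_depth g n + 2"] assms by blast
  then show ?thesis by (rule dyadic_sum_in_dyadic_cover[OF gapped_levels])
qed

lemma surj_real_to_baire: "\<exists>\<sigma> :: real \<Rightarrow> nat \<Rightarrow> nat. surj \<sigma>"
proof -
  have "inj (\<lambda>g. dyadic_sum (levels (\<lambda>j _. g j)))"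
  proof (rule injI)
    fix g g' :: "nat \<Rightarrow> nat"
    assume "dyadic_sum (levels (\<lambda>j _. g j)) = dyadic_sum (levels (\<lambda>j _. g' j))"
    then show "g = g'" by (auto dest: dyadic_sum_levels_inj)
  qed
  then show ?thesis using inj_imp_surj_inv by blast
qed

lemma real_eq_if_same_rational_cut:
  fixes s s' :: real
  assumes "\<And>t. t \<in> \<rat> \<Longrightarrow> t < s \<longleftrightarrow> t < s'"
  shows "s = s'"
proof (rule ccontr)
  assume "s \<noteq> s'"
  then obtain t where "t \<in> \<rat>" "min s s' < t" "t < max s s'"
    using Rats_dense_in_real[of "min s s'" "max s s'"] by (cases "s < s'") (auto simp: min_def max_def)
  with assms[of t] show False by auto
qed

lemma inj_dyadic_sum_levels_by_parity:
  fixes q :: "nat \<Rightarrow> real"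
  assumes parity: "\<And>s j p. a s j p mod 2 = of_bool (q j < s)" and q: "range q = \<rat>"
  shows "inj (\<lambda>s. dyadic_sum (levels (a s)))"
proof (rule injI)
  fix s s' assume "dyadic_sum (levels (a s)) = dyadic_sum (levels (a s'))"
  then have "a s j (levels (a s) j) = a s' j (levels (a s) j)" for j
    by (rule dyadic_sum_levels_inj)
  then have "of_bool (q j < s) = (of_bool (q j < s') :: nat)" for j
    by (metis parity)
  then have "q j < s \<longleftrightarrow> q j < s'" for j
    by (simp add: of_bool_eq_iff)
  then show "s = s'"
    by (intro real_eq_if_same_rational_cut) (auto simp flip: q)
qed

lemma lesspoll_iff_card_of_ordLess: "A \<prec> B \<longleftrightarrow> |A| <o |B|"
  unfolding lesspoll_def lepoll_def card_of_ordLeq eqpoll_iff_card_of_ordIso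
  using ordLeq_iff_ordLess_or_ordIso not_ordLess_ordIso by blast

lemma underS_card_of_lesspoll: "a \<in> A \<Longrightarrow> underS |A| a \<prec> A"
  unfolding lesspoll_iff_card_of_ordLess
  by (rule card_of_underS) (simp_all add: Field_card_of card_of_card_order_on)

lemma image_underS_card_of_lesspoll: "a \<in> A \<Longrightarrow> f ` underS |A| a \<prec> A"
  by (rule lesspoll_trans1[OF image_lepoll underS_card_of_lesspoll])

lemma in_card_of_if_notin_underS:
  assumes "a \<in> A" "b \<in> A" "b \<notin> underS |A| a"
  shows "(a, b) \<in> |A|"
  using assms wo_rel.in_notinI[of "|A|" a b] card_of_Well_order[of A]
  unfolding wo_rel_def underS_def Field_card_of by blast

lemma exists_undominated:
  fixes F :: "(nat \<Rightarrow> nat) set"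
  assumes "d_eq_c" and "F \<prec> (UNIV :: real set)"
  shows "\<exists>k. \<forall>f\<in>F. \<exists>n. f n \<le> k n"
proof -
  have "\<not> dominating F" using assms unfolding d_eq_c_def by blast
  then show ?thesis unfolding dominating_def by (auto simp: not_less)
qed

text \<open>\<open>(r, s) \<in> continuum_order\<close> means \<open>r \<le> s\<close> in a well-order of the reals whose proper
  initial segments have fewer than continuum many elements.\<close>

abbreviation continuum_order :: "real rel" where
  "continuum_order \<equiv> |UNIV :: real set|"

lemma exists_inj_eventually_in_dyadic_cover:
  assumes "d_eq_c"
  obtains x :: "real \<Rightarrow> real"
  where "inj x" and "\<And>g. \<exists>r. \<forall>s. (r, s) \<in> continuum_order \<longrightarrow> x s \<in> dyadic_cover g"
proof -
  obtain \<sigma> :: "real \<Rightarrow> nat \<Rightarrow> nat" where \<sigma>: "surj \<sigma>"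
    using surj_real_to_baire by blast
  define f where "f r n = cover_depth (\<sigma> r) (cover_depth (\<sigma> r) n + 2) + 2" for r n
  have "\<exists>k. \<forall>r\<in>underS continuum_order s. \<exists>n. f r n \<le> k n" for s
    using exists_undominated[OF assms image_underS_card_of_lesspoll[of s UNIV f, OF UNIV_I]] by simp
  then obtain k where k: "\<And>s. \<forall>r\<in>underS continuum_order s. \<exists>n. f r n \<le> k s n"
    by metis
  obtain q :: "nat \<Rightarrow> real" where q: "range q = \<rat>"
    using range_from_nat_into[OF _ countable_rat] by blast
  \<comment> \<open>The parity of \<open>a s\<close> makes \<open>x\<close> injective; its size makes the levels of \<open>x s\<close>
    jump past \<open>cover_depth (\<sigma> r)\<close> for every \<open>r \<le> s\<close>.\<close>
  define a where "a s j p = 2 * (\<Sum>i\<le>p. k s i + f s i) + of_bool (q j < s)" for s j p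
  define x where "x s = dyadic_sum (levels (a s))" for s
  have "inj x"
    unfolding x_def by (rule inj_dyadic_sum_levels_by_parity[OF _ q]) (simp add: a_def)
  moreover have "\<exists>r. \<forall>s. (r, s) \<in> continuum_order \<longrightarrow> x s \<in> dyadic_cover g" for g
  proof -
    obtain r where r: "g = \<sigma> r" using \<sigma> by blast
    have "x s \<in> dyadic_cover g" if "(r, s) \<in> continuum_order" for s
    proof -
      have "\<exists>n. f r n \<le> k s n + f s n"
      proof (cases "r = s")
        case False
        then have "r \<in> underS continuum_order s" using that by (rule underS_I)
        then obtain n where "f r n \<le> k s n" using k by blast
        then show ?thesis by (intro exI[of _ n] trans_le_add1)
      qed simp
      then obtain n where "f r n \<le> k s n + f s n" ..
      then have "cover_depth g (cover_depth g n + 2) + 2 \<le> k s n + f s n"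
        by (simp add: f_def r)
      moreover have "(\<Sum>i\<le>p. k s i + f s i) \<le> a s j p" for j p
        by (simp add: a_def)
      ultimately show ?thesis
        unfolding x_def by (rule dyadic_sum_levels_in_dyadic_cover)
    qed
    then show ?thesis by blast
  qed
  ultimately show ?thesis by (rule that)
qed

lemma strong_measure_zero_if_eventually_in_dyadic_cover:
  assumes "Unif_S" and "\<And>g. \<exists>r. \<forall>s. (r, s) \<in> continuum_order \<longrightarrow> x s \<in> dyadic_cover g"
  shows "strong_measure_zero (range x)"
proof (rule strong_measure_zeroI_dyadic)
  fix g :: "nat \<Rightarrow> nat"
  obtain r where r: "\<forall>s. (r, s) \<in> continuum_order \<longrightarrow> x s \<in> dyadic_cover (\<lambda>i. g (2 * i))"
    using assms(2)[of "\<lambda>i. g (2 * i)"] by blast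
  have "strong_measure_zero (x ` underS continuum_order r)"
    using assms(1) image_underS_card_of_lesspoll[of r UNIV x, OF UNIV_I]
    unfolding Unif_S_def by blast
  then have "coverable (\<lambda>i. (1/2) ^ g (2 * i + 1)) (x ` underS continuum_order r)"
    unfolding strong_measure_zero_iff_coverable by simp
  moreover have "coverable (\<lambda>i. (1/2) ^ g (2 * i)) (x ` {s. (r, s) \<in> continuum_order})"
    by (rule coverable_mono[OF coverable_dyadic_cover]) (use r in auto)
  ultimately have "coverable (\<lambda>i. (1/2) ^ g i)
      (x ` {s. (r, s) \<in> continuum_order} \<union> x ` underS continuum_order r)"
    by (rule coverable_Un_interleave[rotated])
  moreover have "range x \<subseteq> x ` {s. (r, s) \<in> continuum_order} \<union> x ` underS continuum_order r"
    using in_card_of_if_notin_underS[of r UNIV] by blast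
  ultimately show "coverable (\<lambda>i. (1/2) ^ g i) (range x)"
    by (rule coverable_mono) simp
qed

theorem theorem0p11:
  assumes "Unif_S" and "d_eq_c"
  shows "\<exists>X :: real set. strong_measure_zero X \<and> X \<approx> (UNIV :: real set)"
proof -
  obtain x :: "real \<Rightarrow> real"
    where inj: "inj x"
      and tail: "\<And>g. \<exists>r. \<forall>s. (r, s) \<in> continuum_order \<longrightarrow> x s \<in> dyadic_cover g"
    using exists_inj_eventually_in_dyadic_cover[OF assms(2)] by blast
  have "strong_measure_zero (range x)"
    using assms(1) tail by (rule strong_measure_zero_if_eventually_in_dyadic_cover)
  moreover have "range x \<approx> (UNIV :: real set)"
    using inj by (rule inj_on_image_eqpoll_self)
  ultimately show ?thesis by blast
qed

end
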